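(* Assume $E$ is countable. Let $\gamma$ be a POS and $\Delta\in\mathcal T_b$. Then there is an enumeration $x_1,\dots,x_n$ of the points of $\Delta$ such that $\gamma_\Delta=\gamma_{x_1}\gamma_{x_2}\cdots\gamma_{x_n}$ (as kernels on $\mathcal F_{S\setminus\Delta_+}$).
   Context: $(S,\le)$ is a countable partially ordered set. For $x\in S$ write $x_-=\{y\in S:y<x\}$, $x_+=\{y\in S:y>x\}$. For $\Upsilon\subset S$: $\max(\Upsilon)=\{x\in\Upsilon: y\notin\Upsilon\text{ for all }y>x\}$, $\min(\Upsilon)=\{x\in\Upsilon: y\notin\Upsilon\text{ for all }y<x\}$, the past $\Upsilon_-=\{x\in S\setminus\Upsilon:\exists y\in\Upsilon,\ x<y\}$, the future $\Upsilon_+=\{x\in S\setminus\Upsilon:\exists y\in\Upsilon,\ x>y\}$, and the outer time $\Upsilon^*=\{x\in S: x\text{ is comparable with no }y\in\Upsilon\}$. Standing assumptions: for every $x\in S$, $\max(x_-)$ and $\min(x_+)$ are finite, every $y<x$ satisfies $y\le y_0<x$ for some $y_0\in\max(x_-)$, every $z>x$ satisfies $z\ge z_0>x$ for some $z_0\in\min(x_+)$; and $S$ has no minimal element. A finite set $\Lambda\subset S$ is a time box if $\Lambda_-\cap\Lambda_+=\emptyset$; $\mathcal T_b$ denotes the set of time boxes (every singleton is one). $(E,\mathcal E)$ is a measurable space (colors), $\Omega=E^S$ with the product $\sigma$-algebra $\mathcal F$; for $\Upsilon\subset S$, $\mathcal F_\Upsilon$ is the $\sigma$-algebra generated by the coordinates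 in $\Upsilon$. A proper oriented kernel on $\Lambda\in\mathcal T_b$ is a map $\gamma_\Lambda:\mathcal F_{S\setminus\Lambda_+}\times\Omega\to[0,1]$ such that (a) $\gamma_\Lambda(\cdot,\omega)$ is a probability measure for each $\omega$; (b) $\gamma_\Lambda(A,\cdot)$ is $\mathcal F_{\Lambda_-\cup\Lambda^*}$-measurable for each $A\in\mathcal F_{S\setminus\Lambda_+}$; (c) $\gamma_\Lambda(A,\cdot)$ is $\mathcal F_{\Lambda_-}$-measurable for each $A\in\mathcal F_\Lambda$; (d) $\gamma_\Lambda(B,\omega)=\mathbf 1_B(\omega)$ for all $B\in\mathcal F_{\Lambda_-\cup\Lambda^*}$. Write $\gamma_\Lambda(f\mid\omega)=\int f(\xi)\,\gamma_\Lambda(d\xi,\omega)$, $\gamma_\Lambda f=\gamma_\Lambda(f\mid\cdot)$, and define composition by $(\gamma_\Delta\gamma_\Lambda)(f\mid\omega)=\int\gamma_\Lambda(f\mid\sigma)\,\gamma_\Delta(d\sigma,\omega)$ (so $\gamma_{x_1}\cdots\gamma_{x_n}f=\gamma_{x_1}(\gamma_{x_2}(\cdots\gamma_{x_n}f))$). A partially oriented specification (POS) is a family $\gamma=(\gamma_\Lambda)_{\Lambda\in\mathcal T_b}$ of proper oriented kernels with $\gamma_\Delta\gamma_\Lambda=\gamma_\Delta$ on $\mathcal F_{S\setminus\Lambda_+}$ (i.e. for all bounded $\mathcal F_{S\setminus\Lambda_+}$-measurable $h$ and all $\omega$) whenever $\Lambda\subset\Delta$ are time boxes. We write $\gamma_x=\gamma_{\{x\}}$.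 *)

theory Defs
  imports "HOL-Probability.Probability"
begin

definition maxset :: "'s::order set \<Rightarrow> 's set" where
  "maxset U = {x \<in> U. \<forall>y. x < y \<longrightarrow> y \<notin> U}"

definition minset :: "'s::order set \<Rightarrow> 's set" where
  "minset U = {x \<in> U. \<forall>y. y < x \<longrightarrow> y \<notin> U}"

definition past :: "'s::order set \<Rightarrow> 's set" where
  "past U = {x. x \<notin> U \<and> (\<exists>y\<in>U. x < y)}"

definition fut :: "'s::order set \<Rightarrow> 's set" where
  "fut U = {x. x \<notin> U \<and> (\<exists>y\<in>U. y < x)}"

definition outer :: "'s::order set \<Rightarrow> 's set" where
  "outer U = {x. \<forall>y\<in>U. \<not> x \<le> y \<and> \<not> y \<le> x}"

definition standing_assms :: "'s::order itself \<Rightarrow> bool" where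
  "standing_assms _ \<longleftrightarrow>
     (\<forall>x::'s. finite (maxset {y. y < x}) \<and> finite (minset {z. x < z})
        \<and> (\<forall>y. y < x \<longrightarrow> (\<exists>y0\<in>maxset {y. y < x}. y \<le> y0))
        \<and> (\<forall>z. x < z \<longrightarrow> (\<exists>z0\<in>minset {z. x < z}. z0 \<le> z)))
   \<and> (\<forall>x::'s. \<exists>y. y < x)"

definition time_box :: "'s::order set \<Rightarrow> bool" where
  "time_box L \<longleftrightarrow> finite L \<and> past L \<inter> fut L = {}"

text \<open>The sigma-algebra F_U on Omega = E^S generated by the coordinates in U
  (colour space E carries the discrete sigma-algebra).\<close>
definition Fsig :: "'s set \<Rightarrow> ('s \<Rightarrow> 'e) measure" where
  "Fsig U = sigma UNIV {{\<omega>. \<omega> x \<in> A} | x A. x \<in> U}"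

text \<open>A kernel is represented as a map omega \<mapsto> measure on (Omega, F_{S - L_+}).\<close>
definition proper_oriented_kernel ::
  "'s::order set \<Rightarrow> (('s \<Rightarrow> 'e) \<Rightarrow> ('s \<Rightarrow> 'e) measure) \<Rightarrow> bool" where
  "proper_oriented_kernel L g \<longleftrightarrow>
     (\<forall>\<omega>. prob_space (g \<omega>) \<and> sets (g \<omega>) = sets (Fsig (- fut L)))
   \<and> (\<forall>A \<in> sets (Fsig (- fut L)).
        (\<lambda>\<omega>. measure (g \<omega>) A) \<in> borel_measurable (Fsig (past L \<union> outer L)))
   \<and> (\<forall>A \<in> sets (Fsig L). (\<lambda>\<omega>. measure (g \<omega>) A) \<in> borel_measurable (Fsig (past L)))
   \<and> (\<forall>B \<in> sets (Fsig (past L \<union> outer L)). \<forall>\<omega>. measure (g \<omega>) B = indicator B \<omega>)"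

definition POS :: "('s::order set \<Rightarrow> ('s \<Rightarrow> 'e) \<Rightarrow> ('s \<Rightarrow> 'e) measure) \<Rightarrow> bool" where
  "POS \<gamma> \<longleftrightarrow>
     (\<forall>L. time_box L \<longrightarrow> proper_oriented_kernel L (\<gamma> L))
   \<and> (\<forall>L D. time_box L \<and> time_box D \<and> L \<subseteq> D \<longrightarrow>
        (\<forall>h :: ('s \<Rightarrow> 'e) \<Rightarrow> real.
           h \<in> borel_measurable (Fsig (- fut L)) \<and> h \<in> borel_measurable (Fsig (- fut D))
           \<and> (\<exists>B. \<forall>\<omega>. \<bar>h \<omega>\<bar> \<le> B) \<longrightarrow>
           (\<forall>\<omega>. (\<integral>\<sigma>. (\<integral>\<xi>. h \<xi> \<partial>(\<gamma> L \<sigma>)) \<partial>(\<gamma> D \<omega>)) = (\<integral>\<xi>. h \<xi> \<partial>(\<gamma> D \<omega>)))))"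

definition kcomp :: "('s set \<Rightarrow> ('s \<Rightarrow> 'e) \<Rightarrow> ('s \<Rightarrow> 'e) measure) \<Rightarrow> 's list
    \<Rightarrow> (('s \<Rightarrow> 'e) \<Rightarrow> real) \<Rightarrow> ('s \<Rightarrow> 'e) \<Rightarrow> real" where
  "kcomp \<gamma> xs f = foldr (\<lambda>x g. \<lambda>\<omega>. \<integral>\<sigma>. g \<sigma> \<partial>(\<gamma> {x} \<omega>)) xs f"

end

theory Submission
  imports Defs
begin

(*
  Enumerate the time box \<Delta> as x1, ..., xn along a linear extension
  of the order (no later point lies strictly below an earlier one).  With
  W = \<Delta>_- \<union> \<Delta>^* one shows, by induction on the length of the prefix x1..xk,
  for every bounded f measurable w.r.t. W \<union> {x1..xk}:
    (i)  \<gamma>_{x1} ... \<gamma>_{xk} f is measurable w.r.t. W, and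
    (ii) \<gamma>_\<Delta> f = \<gamma>_\<Delta> (\<gamma>_{x1} ... \<gamma>_{xk} f).
  The step peels off the last point xk:  \<gamma>_{xk} f no longer depends on the colour
  at xk (it only uses the past of xk, which lies in W \<union> {x1..x(k-1)}), and
  \<gamma>_\<Delta> \<gamma>_{xk} = \<gamma>_\<Delta> by consistency of the POS.  Finally, a proper kernel
  fixes W-measurable functions, so \<gamma>_\<Delta> f = \<gamma>_{x1} ... \<gamma>_{xn} f.
*)

section \<open>Coordinate \<sigma>-algebras\<close>

definition coord_sets :: "'s set \<Rightarrow> ('s \<Rightarrow> 'e) set set" where
  "coord_sets U = {{\<omega>. \<omega> x \<in> A} | x A. x \<in> U}"

lemma Fsig_coord_sets: "Fsig U = sigma UNIV (coord_sets U)"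
  by (simp add: Fsig_def coord_sets_def)

lemma space_Fsig [simp]: "space (Fsig U) = UNIV"
  unfolding Fsig_coord_sets by (simp add: space_measure_of_conv)

lemma sets_Fsig: "sets (Fsig U) = sigma_sets UNIV (coord_sets U)"
  unfolding Fsig_coord_sets by (simp add: sets_measure_of_conv)

lemma Fsig_coord: "x \<in> U \<Longrightarrow> {\<omega>. \<omega> x \<in> A} \<in> sets (Fsig U)"
  unfolding sets_Fsig coord_sets_def by (rule sigma_sets.Basic) blast

lemma Fsig_mono: "U \<subseteq> U' \<Longrightarrow> sets (Fsig U) \<subseteq> sets (Fsig U')"
  unfolding sets_Fsig coord_sets_def by (rule sigma_sets_mono') auto

lemma Fsig_measurable_mono:
  "f \<in> borel_measurable (Fsig U) \<Longrightarrow> U \<subseteq> U' \<Longrightarrow> f \<in> borel_measurable (Fsig U')"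
  using measurable_mono[of borel borel "Fsig U" "Fsig U'"] Fsig_mono by auto

lemma Fsig_set_local:
  assumes "A \<in> sets (Fsig U)" "\<forall>y\<in>U. \<omega> y = \<omega>' y"
  shows "\<omega> \<in> A \<longleftrightarrow> \<omega>' \<in> A"
proof -
  have "A \<in> sigma_sets UNIV (coord_sets U)" using assms(1) by (simp add: sets_Fsig)
  then show ?thesis
  proof induct
    case (Basic a) then show ?case using assms(2) by (auto simp: coord_sets_def)
  qed auto
qed

lemma Fsig_fun_local:
  fixes g :: "_ \<Rightarrow> real"
  assumes "g \<in> borel_measurable (Fsig U)" "\<forall>y\<in>U. \<omega> y = \<omega>' y"
  shows "g \<omega> = g \<omega>'"
  using Fsig_set_local[OF borel_measurable_vimage[OF assms(1), of "g \<omega>"] assms(2)] by auto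

text \<open>Conversely, a measurable function depending only on the coordinates in \<open>U\<close>
  is \<open>F_U\<close>-measurable: it factors through the restriction of configurations to \<open>U\<close>.\<close>
lemma Fsig_measurable_if_local:
  fixes G :: "('s \<Rightarrow> 'e) \<Rightarrow> real"
  assumes G: "G \<in> borel_measurable (Fsig UNIV)"
    and local: "\<And>\<omega> \<omega>'. \<forall>y\<in>U. \<omega> y = \<omega>' y \<Longrightarrow> G \<omega> = G \<omega>'"
  shows "G \<in> borel_measurable (Fsig U)"
proof -
  define restr where "restr \<omega> = (\<lambda>y. if y \<in> U then \<omega> y else undefined)" for \<omega> :: "'s \<Rightarrow> 'e"
  have "restr \<in> measurable (Fsig U) (Fsig UNIV)"
    unfolding Fsig_coord_sets[of UNIV]
  proof (rule measurable_measure_of)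
    show "coord_sets UNIV \<subseteq> Pow UNIV" by auto
    show "restr \<in> space (Fsig U) \<rightarrow> UNIV" by simp
    fix Y :: "('s \<Rightarrow> 'e) set" assume "Y \<in> coord_sets UNIV"
    then obtain y A where Y: "Y = {\<omega>. \<omega> y \<in> A}" by (auto simp: coord_sets_def)
    show "restr -` Y \<inter> space (Fsig U) \<in> sets (Fsig U)"
    proof (cases "y \<in> U")
      case True
      then have "restr -` Y \<inter> space (Fsig U) = {\<omega>. \<omega> y \<in> A}" by (auto simp: Y restr_def)
      then show ?thesis using Fsig_coord[OF True] by simp
    next
      case False
      then have "restr -` Y \<inter> space (Fsig U) = (if undefined \<in> A then space (Fsig U) else {})"
        by (auto simp: Y restr_def)
      then show ?thesis by (simp del: space_Fsig)
    qed
  qed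
  then have "(\<lambda>\<omega>. G (restr \<omega>)) \<in> borel_measurable (Fsig U)" using G by measurable
  moreover have "G (restr \<omega>) = G \<omega>" for \<omega> by (rule local) (simp add: restr_def)
  ultimately show ?thesis by simp
qed

lemma Fsig_agree_set:
  fixes \<omega> :: "'s::countable \<Rightarrow> 'e"
  shows "{\<sigma>. \<forall>y\<in>U. \<sigma> y = \<omega> y} \<in> sets (Fsig U)"
proof (cases "U = {}")
  case True then show ?thesis using sets.top[of "Fsig U"] by simp
next
  case False
  have coord: "{\<sigma>. \<sigma> y = \<omega> y} \<in> sets (Fsig U)" if "y \<in> U" for y
    using Fsig_coord[OF that, of "{\<omega> y}"] by simp
  have "{\<sigma>. \<forall>y\<in>U. \<sigma> y = \<omega> y} = (\<Inter>y\<in>U. {\<sigma>. \<sigma> y = \<omega> y})" by auto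
  also have "\<dots> \<in> sets (Fsig U)"
    using False coord by (intro sets.countable_INT') auto
  finally show ?thesis .
qed

section \<open>Order facts about time boxes\<close>

lemma compl_fut:
  "past L \<inter> fut L = {} \<Longrightarrow> - fut (L::'s::order set) = L \<union> past L \<union> outer L"
  unfolding fut_def past_def outer_def by (auto simp: order.order_iff_strict)

lemma past_outer_disjoint_fut:
  "past L \<inter> fut L = {} \<Longrightarrow> (past L \<union> outer L) \<inter> fut L = {}"
  unfolding outer_def fut_def by auto

lemma time_box_singleton: "time_box {x::'s::order}"
  unfolding time_box_def past_def fut_def by auto

lemma linear_extension:
  fixes A :: "'s::order set"
  assumes "finite A"
  shows "\<exists>xs. distinct xs \<and> set xs = A \<and> sorted_wrt (\<lambda>a b. \<not> b < a) xs"
  using assms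
proof (induction "card A" arbitrary: A)
  case 0
  then show ?case by auto
next
  case (Suc n)
  then have "A \<noteq> {}" by auto
  then obtain m where m: "m \<in> A" "\<forall>b\<in>A. m \<le> b \<longrightarrow> m = b"
    using finite_has_maximal[OF Suc.prems] by blast
  obtain xs where xs: "distinct xs" "set xs = A - {m}" "sorted_wrt (\<lambda>a b. \<not> b < a) xs"
  proof -
    have "n = card (A - {m})" using Suc.hyps(2) Suc.prems m(1) by simp
    then show ?thesis using Suc.hyps(1)[of "A - {m}"] Suc.prems that by blast
  qed
  have "\<forall>a\<in>set xs. \<not> m < a" using m xs(2) by auto
  then show ?case using xs m(1)
    by (intro exI[of _ "xs @ [m]"]) (auto simp: sorted_wrt_append)
qed

lemma last_site_frontier:
  fixes \<Delta> :: "'s::order set"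
  assumes tb: "past \<Delta> \<inter> fut \<Delta> = {}"
    and sub: "set (xs @ [x]) \<subseteq> \<Delta>"
    and down: "\<forall>a\<in>set (xs @ [x]). \<forall>y\<in>\<Delta>. y < a \<longrightarrow> y \<in> set (xs @ [x])"
    and last: "\<forall>a\<in>set xs. \<not> x < a"
    and V: "V = past \<Delta> \<union> outer \<Delta> \<union> set xs \<union> {x}"
  shows "past {x} \<subseteq> V" "V \<subseteq> - fut {x}" "V \<subseteq> - fut \<Delta>"
proof -
  have xD: "x \<in> \<Delta>" using sub by auto
  have WD: "(past \<Delta> \<union> outer \<Delta>) \<inter> \<Delta> = {}" unfolding past_def outer_def by auto
  show "past {x} \<subseteq> V"
  proof
    fix y assume "y \<in> past {x}"
    then have yx: "y < x" by (simp add: past_def)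
    show "y \<in> V"
    proof (cases "y \<in> \<Delta>")
      case True
      then show ?thesis using down yx by (auto simp: V)
    next
      case False
      then show ?thesis using xD yx by (auto simp: past_def V)
    qed
  qed
  show "V \<subseteq> - fut {x}"
  proof
    fix z assume zV: "z \<in> V"
    show "z \<in> - fut {x}"
    proof
      assume "z \<in> fut {x}"
      then have xz: "x < z" by (simp add: fut_def)
      show False
      proof (cases "z \<in> \<Delta>")
        case True
        then show False using zV WD xz last by (auto simp: V)
      next
        case False
        then have "z \<in> fut \<Delta>" using xD xz by (auto simp: fut_def)
        moreover have "z \<in> past \<Delta> \<union> outer \<Delta>" using False zV xD sub by (auto simp: V)
        ultimately show False using past_outer_disjoint_fut[OF tb] by blast
      qed
    qed
  qed
  show "V \<subseteq> - fut \<Delta>"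
    using past_outer_disjoint_fut[OF tb] sub by (auto simp: V fut_def)
qed

section \<open>Proper oriented kernels\<close>

lemma pok_prob: "proper_oriented_kernel L g \<Longrightarrow> prob_space (g \<omega>)"
  unfolding proper_oriented_kernel_def by auto

lemma pok_sets: "proper_oriented_kernel L g \<Longrightarrow> sets (g \<omega>) = sets (Fsig (- fut L))"
  unfolding proper_oriented_kernel_def by auto

lemma pok_space: "proper_oriented_kernel L g \<Longrightarrow> space (g \<omega>) = UNIV"
  using pok_sets[of L g \<omega>] sets_eq_imp_space_eq by fastforce

lemma pok_measurable:
  "proper_oriented_kernel L g \<Longrightarrow> f \<in> borel_measurable (Fsig (- fut L)) \<Longrightarrow> f \<in> borel_measurable (g \<omega>)"
  using measurable_cong_sets[OF pok_sets[of L g \<omega>, symmetric] refl] by blast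

lemma pok_kernel:
  fixes g :: "('s::order \<Rightarrow> 'e) \<Rightarrow> ('s \<Rightarrow> 'e) measure"
  assumes "proper_oriented_kernel L g"
  shows "g \<in> measurable (Fsig (past L \<union> outer L)) (subprob_algebra (Fsig (- fut L)))"
proof (rule measurable_subprob_algebra)
  fix a
  show "subprob_space (g a)" using pok_prob[OF assms] prob_space_imp_subprob_space by blast
  show "sets (g a) = sets (Fsig (- fut L))" using pok_sets[OF assms] .
next
  fix A :: "('s \<Rightarrow> 'e) set" assume "A \<in> sets (Fsig (- fut L))"
  then have "(\<lambda>a. measure (g a) A) \<in> borel_measurable (Fsig (past L \<union> outer L))"
    using assms unfolding proper_oriented_kernel_def by blast
  moreover have "emeasure (g a) A = ennreal (measure (g a) A)" for a
    using finite_measure.emeasure_eq_measure[OF prob_space.finite_measure[OF pok_prob[OF assms]]] .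
  ultimately show "(\<lambda>a. emeasure (g a) A) \<in> borel_measurable (Fsig (past L \<union> outer L))"
    by simp
qed

lemma pok_integral_measurable:
  fixes f :: "_ \<Rightarrow> real"
  assumes "proper_oriented_kernel L g" "f \<in> borel_measurable (Fsig (- fut L))"
  shows "(\<lambda>\<omega>. \<integral>\<sigma>. f \<sigma> \<partial>(g \<omega>)) \<in> borel_measurable (Fsig (past L \<union> outer L))"
  using measurable_compose[OF pok_kernel[OF assms(1)] integral_measurable_subprob_algebra[OF assms(2)]] .

text \<open>Property (d): almost surely the kernel keeps the boundary condition on past and outer time.\<close>
lemma pok_AE_boundary:
  fixes g :: "('s::{order,countable} \<Rightarrow> 'e) \<Rightarrow> _"
  assumes "proper_oriented_kernel L g"
  shows "AE \<sigma> in g \<omega>. \<forall>y\<in>past L \<union> outer L. \<sigma> y = \<omega> y"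
proof -
  interpret prob_space "g \<omega>" using pok_prob[OF assms] .
  let ?C = "{\<sigma>. \<forall>y\<in>past L \<union> outer L. \<sigma> y = \<omega> y}"
  have "measure (g \<omega>) ?C = indicator ?C \<omega>"
    using assms Fsig_agree_set unfolding proper_oriented_kernel_def by blast
  then have "prob ?C = 1" by simp
  from AE_prob_1[OF this] show ?thesis by simp
qed

lemma pok_integral_boundary:
  fixes h :: "_ \<Rightarrow> real" and g :: "('s::{order,countable} \<Rightarrow> 'e) \<Rightarrow> _"
  assumes pk: "proper_oriented_kernel L g" and tb: "past L \<inter> fut L = {}"
    and h: "h \<in> borel_measurable (Fsig (past L \<union> outer L))"
  shows "(\<integral>\<sigma>. h \<sigma> \<partial>(g \<omega>)) = h \<omega>"
proof -
  interpret prob_space "g \<omega>" using pok_prob[OF pk] .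
  have "past L \<union> outer L \<subseteq> - fut L" using past_outer_disjoint_fut[OF tb] by blast
  then have "h \<in> borel_measurable (g \<omega>)"
    using pok_measurable[OF pk] Fsig_measurable_mono[OF h] by blast
  then have "(\<integral>\<sigma>. h \<sigma> \<partial>(g \<omega>)) = (\<integral>\<sigma>. h \<omega> \<partial>(g \<omega>))"
    by (rule integral_cong_AE) (use pok_AE_boundary[OF pk, of \<omega>] Fsig_fun_local[OF h] in auto)
  also have "\<dots> = h \<omega>" using prob_space by simp
  finally show ?thesis .
qed

lemma pok_integral_bound:
  fixes f :: "_ \<Rightarrow> real"
  assumes pk: "proper_oriented_kernel L g" and f: "f \<in> borel_measurable (Fsig (- fut L))"
    and B: "\<forall>\<omega>. \<bar>f \<omega>\<bar> \<le> B"
  shows "\<bar>\<integral>\<sigma>. f \<sigma> \<partial>(g \<omega>)\<bar> \<le> B"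
proof -
  interpret prob_space "g \<omega>" using pok_prob[OF pk] .
  have int: "integrable (g \<omega>) f"
    using B pok_measurable[OF pk f] by (intro integrable_const_bound[where B=B]) auto
  have "(\<integral>\<sigma>. f \<sigma> \<partial>(g \<omega>)) \<le> B"
    by (rule integral_le_const[OF int]) (use B in \<open>auto simp: abs_le_iff\<close>)
  moreover have "- B \<le> (\<integral>\<sigma>. f \<sigma> \<partial>(g \<omega>))"
    by (rule integral_ge_const[OF int]) (use B in \<open>auto simp: abs_le_iff minus_le_iff\<close>)
  ultimately show ?thesis by simp
qed

section \<open>Kernels at a single site\<close>

definition site_law :: "(('s \<Rightarrow> 'e) \<Rightarrow> ('s \<Rightarrow> 'e) measure) \<Rightarrow> 's \<Rightarrow> ('s \<Rightarrow> 'e) \<Rightarrow> 'e measure" where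
  "site_law g x \<omega> = distr (g \<omega>) (count_space UNIV) (\<lambda>\<sigma>. \<sigma> x)"

lemma site_coord_measurable:
  fixes g :: "('s::order \<Rightarrow> 'e::countable) \<Rightarrow> ('s \<Rightarrow> 'e) measure"
  assumes pk: "proper_oriented_kernel {x} g"
  shows "(\<lambda>\<sigma>. \<sigma> x) \<in> measurable (g \<omega>) (count_space UNIV)"
proof -
  have "{\<sigma>. \<sigma> x \<in> {a}} \<in> sets (g \<omega>)" for a
    unfolding pok_sets[OF pk] by (rule Fsig_coord) (simp add: fut_def)
  then show ?thesis
    unfolding measurable_count_space_eq2_countable pok_space[OF pk]
    by (auto simp: vimage_def)
qed

text \<open>The kernel at \<open>x\<close> only resamples the colour at \<open>x\<close>: integrating \<open>f\<close> amounts to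
  integrating \<open>f(\<omega>[x := e])\<close> against the site law.\<close>
lemma site_integral_eq:
  fixes g :: "('s::{order,countable} \<Rightarrow> 'e::countable) \<Rightarrow> ('s \<Rightarrow> 'e) measure" and f :: "_ \<Rightarrow> real"
  assumes pk: "proper_oriented_kernel {x} g" and f: "f \<in> borel_measurable (Fsig (- fut {x}))"
  shows "(\<integral>\<sigma>. f \<sigma> \<partial>(g \<omega>)) = (\<integral>e. f (fun_upd \<omega> x e) \<partial>(site_law g x \<omega>))"
proof -
  have W: "- fut {x} - {x} \<subseteq> past {x} \<union> outer {x}"
    using compl_fut[of "{x}"] time_box_singleton[of x] by (auto simp: time_box_def)
  have "(\<integral>\<sigma>. f \<sigma> \<partial>(g \<omega>)) = (\<integral>\<sigma>. f (fun_upd \<omega> x (\<sigma> x)) \<partial>(g \<omega>))"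
  proof (rule integral_cong_AE)
    show "f \<in> borel_measurable (g \<omega>)" using pok_measurable[OF pk f] .
    show "(\<lambda>\<sigma>. f (fun_upd \<omega> x (\<sigma> x))) \<in> borel_measurable (g \<omega>)"
      by (rule measurable_compose[OF site_coord_measurable[OF pk]]) simp
    show "AE \<sigma> in g \<omega>. f \<sigma> = f (fun_upd \<omega> x (\<sigma> x))"
      using pok_AE_boundary[OF pk, of \<omega>]
      by eventually_elim (rule Fsig_fun_local[OF f], use W in auto)
  qed
  also have "\<dots> = (\<integral>e. f (fun_upd \<omega> x e) \<partial>(site_law g x \<omega>))"
    unfolding site_law_def by (rule integral_distr[symmetric, OF site_coord_measurable[OF pk]]) simp
  finally show ?thesis .
qed

text \<open>By property (c) of the kernel, the site law depends only on the past of \<open>x\<close>.\<close>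
lemma site_law_local:
  fixes g :: "('s::order \<Rightarrow> 'e::countable) \<Rightarrow> ('s \<Rightarrow> 'e) measure"
  assumes pk: "proper_oriented_kernel {x} g" and agree: "\<forall>y\<in>past {x}. \<omega> y = \<omega>' y"
  shows "site_law g x \<omega> = site_law g x \<omega>'"
proof (rule measure_eqI)
  show "sets (site_law g x \<omega>) = sets (site_law g x \<omega>')" by (simp add: site_law_def)
  fix A assume "A \<in> sets (site_law g x \<omega>)"
  have "{\<sigma>. \<sigma> x \<in> A} \<in> sets (Fsig {x})" by (rule Fsig_coord) simp
  then have "(\<lambda>\<omega>. measure (g \<omega>) {\<sigma>. \<sigma> x \<in> A}) \<in> borel_measurable (Fsig (past {x}))"
    using pk unfolding proper_oriented_kernel_def by blast
  from Fsig_fun_local[OF this agree]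
  have eq: "measure (g \<omega>) {\<sigma>. \<sigma> x \<in> A} = measure (g \<omega>') {\<sigma>. \<sigma> x \<in> A}" .
  have "emeasure (site_law g x a) A = ennreal (measure (g a) {\<sigma>. \<sigma> x \<in> A})" for a
  proof -
    interpret prob_space "g a" using pok_prob[OF pk] .
    have "emeasure (site_law g x a) A = emeasure (g a) ((\<lambda>\<sigma>. \<sigma> x) -` A \<inter> space (g a))"
      unfolding site_law_def by (rule emeasure_distr[OF site_coord_measurable[OF pk]]) simp
    then show ?thesis by (simp add: pok_space[OF pk] vimage_def emeasure_eq_measure)
  qed
  then show "emeasure (site_law g x \<omega>) A = emeasure (site_law g x \<omega>') A" using eq by simp
qed

lemma site_integral_measurable:
  fixes g :: "('s::{order,countable} \<Rightarrow> 'e::countable) \<Rightarrow> ('s \<Rightarrow> 'e) measure" and f :: "_ \<Rightarrow> real"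
  assumes pk: "proper_oriented_kernel {x} g" and f: "f \<in> borel_measurable (Fsig V)"
    and pV: "past {x} \<subseteq> V" and Vf: "V \<subseteq> - fut {x}"
  shows "(\<lambda>\<omega>. \<integral>\<sigma>. f \<sigma> \<partial>(g \<omega>)) \<in> borel_measurable (Fsig (V - {x}))"
proof (rule Fsig_measurable_if_local)
  have fF: "f \<in> borel_measurable (Fsig (- fut {x}))" using Fsig_measurable_mono[OF f Vf] .
  show "(\<lambda>\<omega>. \<integral>\<sigma>. f \<sigma> \<partial>(g \<omega>)) \<in> borel_measurable (Fsig UNIV)"
    using Fsig_measurable_mono[OF pok_integral_measurable[OF pk fF]] by blast
  fix \<omega> \<omega>' :: "'s \<Rightarrow> 'e" assume agree: "\<forall>y\<in>V - {x}. \<omega> y = \<omega>' y"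
  have "site_law g x \<omega> = site_law g x \<omega>'"
    using site_law_local[OF pk] agree pV by (auto simp: past_def)
  moreover have "f (fun_upd \<omega> x e) = f (fun_upd \<omega>' x e)" for e
    by (rule Fsig_fun_local[OF f]) (use agree in auto)
  ultimately show "(\<integral>\<sigma>. f \<sigma> \<partial>(g \<omega>)) = (\<integral>\<sigma>. f \<sigma> \<partial>(g \<omega>'))"
    by (simp add: site_integral_eq[OF pk fF])
qed

section \<open>Composition of single-site kernels\<close>

lemma POS_pok: "POS \<gamma> \<Longrightarrow> time_box L \<Longrightarrow> proper_oriented_kernel L (\<gamma> L)"
  unfolding POS_def by simp

lemma POS_consistent:
  fixes \<gamma> :: "'s::order set \<Rightarrow> ('s \<Rightarrow> 'e) \<Rightarrow> ('s \<Rightarrow> 'e) measure" and h :: "('s \<Rightarrow> 'e) \<Rightarrow> real"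
  assumes "POS \<gamma>" "time_box L" "time_box D" "L \<subseteq> D"
    "h \<in> borel_measurable (Fsig (- fut L))" "h \<in> borel_measurable (Fsig (- fut D))"
    "\<forall>\<omega>. \<bar>h \<omega>\<bar> \<le> B"
  shows "(\<integral>\<sigma>. (\<integral>\<xi>. h \<xi> \<partial>(\<gamma> L \<sigma>)) \<partial>(\<gamma> D \<omega>)) = (\<integral>\<xi>. h \<xi> \<partial>(\<gamma> D \<omega>))"
  using assms unfolding POS_def by blast

lemma kcomp_snoc: "kcomp \<gamma> (xs @ [x]) f = kcomp \<gamma> xs (\<lambda>\<omega>. \<integral>\<sigma>. f \<sigma> \<partial>(\<gamma> {x} \<omega>))"
  by (simp add: kcomp_def)

lemma kcomp_prefix:
  fixes \<gamma> :: "'s::{order,countable} set \<Rightarrow> ('s \<Rightarrow> 'e::countable) \<Rightarrow> ('s \<Rightarrow> 'e) measure"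
    and f :: "_ \<Rightarrow> real"
  assumes P: "POS \<gamma>" and tb: "time_box \<Delta>"
    and "distinct ys" "set ys \<subseteq> \<Delta>" "\<forall>a\<in>set ys. \<forall>y\<in>\<Delta>. y < a \<longrightarrow> y \<in> set ys"
    and "sorted_wrt (\<lambda>a b. \<not> b < a) ys"
    and "f \<in> borel_measurable (Fsig (past \<Delta> \<union> outer \<Delta> \<union> set ys))" "\<forall>\<omega>. \<bar>f \<omega>\<bar> \<le> B"
  shows "kcomp \<gamma> ys f \<in> borel_measurable (Fsig (past \<Delta> \<union> outer \<Delta>))
     \<and> (\<forall>\<omega>. (\<integral>\<xi>. f \<xi> \<partial>(\<gamma> \<Delta> \<omega>)) = (\<integral>\<xi>. kcomp \<gamma> ys f \<xi> \<partial>(\<gamma> \<Delta> \<omega>)))"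
  using assms(3-)
proof (induction ys arbitrary: f rule: rev_induct)
  case Nil
  then show ?case by (simp add: kcomp_def)
next
  case (snoc x xs)
  have tbD: "past \<Delta> \<inter> fut \<Delta> = {}" using tb by (simp add: time_box_def)
  have xD: "x \<in> \<Delta>" and x_new: "x \<notin> set xs" using snoc.prems by auto
  have last: "\<forall>a\<in>set xs. \<not> x < a" using snoc.prems(4) by (simp add: sorted_wrt_append)
  have pkx: "proper_oriented_kernel {x} (\<gamma> {x})" using POS_pok[OF P time_box_singleton] .
  define V where "V = past \<Delta> \<union> outer \<Delta> \<union> set xs \<union> {x}"
  note frontier = last_site_frontier[OF tbD snoc.prems(2,3) last V_def]
  have fV: "f \<in> borel_measurable (Fsig V)" using snoc.prems(5) by (simp add: V_def)
  define g where "g = (\<lambda>\<omega>. \<integral>\<sigma>. f \<sigma> \<partial>(\<gamma> {x} \<omega>))"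
  have "V - {x} = past \<Delta> \<union> outer \<Delta> \<union> set xs"
    using x_new xD by (auto simp: V_def past_def outer_def)
  then have g_meas: "g \<in> borel_measurable (Fsig (past \<Delta> \<union> outer \<Delta> \<union> set xs))"
    using site_integral_measurable[OF pkx fV frontier(1,2)] by (simp add: g_def)
  have g_bound: "\<forall>\<omega>. \<bar>g \<omega>\<bar> \<le> B"
    unfolding g_def using pok_integral_bound[OF pkx Fsig_measurable_mono[OF fV frontier(2)] snoc.prems(6)] by blast
  have down: "\<forall>a\<in>set xs. \<forall>y\<in>\<Delta>. y < a \<longrightarrow> y \<in> set xs"
    using snoc.prems(3) last by fastforce
  have IH: "kcomp \<gamma> xs g \<in> borel_measurable (Fsig (past \<Delta> \<union> outer \<Delta>))
     \<and> (\<forall>\<omega>. (\<integral>\<xi>. g \<xi> \<partial>(\<gamma> \<Delta> \<omega>)) = (\<integral>\<xi>. kcomp \<gamma> xs g \<xi> \<partial>(\<gamma> \<Delta> \<omega>)))"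
    using snoc.prems(1,2,4) down g_meas g_bound by (intro snoc.IH) (auto simp: sorted_wrt_append)
  have "(\<integral>\<sigma>. g \<sigma> \<partial>(\<gamma> \<Delta> \<omega>)) = (\<integral>\<xi>. f \<xi> \<partial>(\<gamma> \<Delta> \<omega>))" for \<omega>
    unfolding g_def using xD
    by (intro POS_consistent[OF P time_box_singleton tb _ Fsig_measurable_mono[OF fV frontier(2)]
          Fsig_measurable_mono[OF fV frontier(3)] snoc.prems(6)]) simp
  then show ?case using IH by (simp add: kcomp_snoc g_def)
qed

theorem mainTheorem2:
  fixes \<gamma> :: "'s::{order,countable} set \<Rightarrow> ('s \<Rightarrow> 'e::countable) \<Rightarrow> ('s \<Rightarrow> 'e) measure"
    and \<Delta> :: "'s set"
  assumes "standing_assms TYPE('s)"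
    and "POS \<gamma>"
    and "time_box \<Delta>"
  shows "\<exists>xs. distinct xs \<and> set xs = \<Delta> \<and>
    (\<forall>f :: ('s \<Rightarrow> 'e) \<Rightarrow> real. f \<in> borel_measurable (Fsig (- fut \<Delta>)) \<and> (\<exists>B. \<forall>\<omega>. \<bar>f \<omega>\<bar> \<le> B) \<longrightarrow>
       (\<forall>\<omega>. (\<integral>\<xi>. f \<xi> \<partial>(\<gamma> \<Delta> \<omega>)) = kcomp \<gamma> xs f \<omega>))"
proof -
  have tbD: "past \<Delta> \<inter> fut \<Delta> = {}" and fin: "finite \<Delta>" using assms(3) by (auto simp: time_box_def)
  obtain xs where xs: "distinct xs" "set xs = \<Delta>" "sorted_wrt (\<lambda>a b. \<not> b < a) xs"
    using linear_extension[OF fin] by blast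
  have pkD: "proper_oriented_kernel \<Delta> (\<gamma> \<Delta>)" using POS_pok[OF assms(2,3)] .
  have split: "- fut \<Delta> = past \<Delta> \<union> outer \<Delta> \<union> set xs" using compl_fut[OF tbD] xs(2) by auto
  show ?thesis
  proof (intro exI[of _ xs] conjI xs(1,2) allI impI)
    fix f :: "('s \<Rightarrow> 'e) \<Rightarrow> real" and \<omega>
    assume "f \<in> borel_measurable (Fsig (- fut \<Delta>)) \<and> (\<exists>B. \<forall>\<omega>. \<bar>f \<omega>\<bar> \<le> B)"
    then obtain B where f: "f \<in> borel_measurable (Fsig (- fut \<Delta>))" "\<forall>\<omega>. \<bar>f \<omega>\<bar> \<le> B" by blast
    have "kcomp \<gamma> xs f \<in> borel_measurable (Fsig (past \<Delta> \<union> outer \<Delta>))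
        \<and> (\<forall>\<omega>. (\<integral>\<xi>. f \<xi> \<partial>(\<gamma> \<Delta> \<omega>)) = (\<integral>\<xi>. kcomp \<gamma> xs f \<xi> \<partial>(\<gamma> \<Delta> \<omega>)))"
      using f xs by (intro kcomp_prefix[OF assms(2,3)]) (auto simp: split)
    then show "(\<integral>\<xi>. f \<xi> \<partial>(\<gamma> \<Delta> \<omega>)) = kcomp \<gamma> xs f \<omega>"
      using pok_integral_boundary[OF pkD tbD] by simp
  qed
qed

end
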